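(* Let $X$ be a random variable taking values in $\mathbb{R}_+$, and let $\mathbf{J}\in\mathbb{C}^{n\times n}$ be a Jordan block with eigenvalue $\lambda$, $\Re(\lambda)>0$. For $j\in\{1,\dots,n\}$ let $Z_j\sim\mathrm{Erlang}(j,\Re(\lambda))$ be independent of $X$, and let $Z_0=0$. Then for each $j\in\{1,\dots,n\}$, $$\big|\boldsymbol{\mathcal{L}}_X(\mathbf{J})_{1,j}\big|\le\Re(\lambda)^{1-j}\max\big(\mathbb{P}(Z_j>X),\mathbb{P}(Z_{j-1}>X)\big)\le\Re(\lambda)^{1-j}.$$
   Context: $\boldsymbol{\mathcal{L}}_X(\mathbf{J})=\mathbb{E}[\exp(-\mathbf{J}X)]$ (entrywise expectation of the matrix exponential). A Jordan block with eigenvalue $\lambda$ has $\lambda$ on the diagonal, ones on the first superdiagonal and zeros elsewhere. Erlang$(j,\mu)$ is the distribution of a sum of $j$ i.i.d. exponential random variables with rate $\mu$. *)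

theory Defs
  imports "HOL-Probability.Probability" "Jordan_Normal_Form.Jordan_Normal_Form"
begin

definition mat_exp :: "complex mat \<Rightarrow> complex mat" where
  "mat_exp A = mat (dim_row A) (dim_col A)
     (\<lambda>(i,j). \<Sum>k. (A ^\<^sub>m k) $$ (i,j) / of_nat (fact k))"

definition mat_laplace :: "'a measure \<Rightarrow> ('a \<Rightarrow> real) \<Rightarrow> complex mat \<Rightarrow> complex mat" where
  "mat_laplace M X J = mat (dim_row J) (dim_col J)
     (\<lambda>(i,j). integral\<^sup>L M (\<lambda>\<omega>. mat_exp ((- complex_of_real (X \<omega>)) \<cdot>\<^sub>m J) $$ (i,j)))"

end

theory Submission
  imports Defs
begin

(* With mu = Re lambda, the (1,j) entry of exp(-X J) is e^(-lambda X) (-X)^(j-1)/(j-1)!, whose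
   modulus is mu^(1-j) times the Poisson weight e^(-mu X) (mu X)^(j-1)/(j-1)!. That weight is one
   summand of P(N <= j-1) for N ~ Poisson(mu X), and P(N <= j-1) = P(Z_j > X | X) because Z_j is
   the j-th arrival time of a rate-mu Poisson process (erlang_density (j-1) is the law of j
   exponentials). Taking expectations bounds the entry by mu^(1-j) P(Z_j > X), and the
   maximum and the final bound are then immediate. *)

lemma smult_pow_mat:
  fixes A :: "'a :: comm_semiring_1 mat"
  assumes "A \<in> carrier_mat n n"
  shows "(c \<cdot>\<^sub>m A) ^\<^sub>m k = c ^ k \<cdot>\<^sub>m A ^\<^sub>m k"
proof (induction k)
  case 0
  then show ?case using assms by (auto intro!: eq_matI)
next
  case (Suc k)
  have "(c \<cdot>\<^sub>m A) ^\<^sub>m Suc k = (c ^ k \<cdot>\<^sub>m A ^\<^sub>m k) * (c \<cdot>\<^sub>m A)"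
    using Suc by simp
  also have "\<dots> = c ^ k \<cdot>\<^sub>m (A ^\<^sub>m k * (c \<cdot>\<^sub>m A))"
    using assms by (simp add: mult_smult_assoc_mat[of _ n n _ n])
  also have "\<dots> = c ^ k \<cdot>\<^sub>m (c \<cdot>\<^sub>m (A ^\<^sub>m k * A))"
    using assms by (simp add: mult_smult_distrib[of _ n n _ n])
  also have "\<dots> = c ^ Suc k \<cdot>\<^sub>m A ^\<^sub>m Suc k"
    by (rule eq_matI) (auto simp: ac_simps)
  finally show ?case .
qed

lemma sums_choose_exp:
  fixes c x :: "'a :: {real_normed_field, banach}"
  shows "(\<lambda>k. c ^ k * of_nat (k choose m) * x ^ (k - m) / fact k) sums (c ^ m / fact m * exp (c * x))"
proof -
  have "(\<lambda>i. (c * x) ^ i / fact i) sums exp (c * x)"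
    using exp_converges[of "c * x"] by (simp add: scaleR_conv_of_real divide_inverse mult.commute)
  then have "(\<lambda>i. c ^ m / fact m * ((c * x) ^ i / fact i)) sums (c ^ m / fact m * exp (c * x))"
    by (rule sums_mult)
  moreover have "c ^ m / fact m * ((c * x) ^ i / fact i)
      = c ^ (i + m) * of_nat ((i + m) choose m) * x ^ (i + m - m) / fact (i + m)" for i
  proof -
    have "fact m * fact i * ((i + m) choose m) = fact (i + m)"
      using binomial_fact_lemma[of m "i + m"] by simp
    then have "(fact (i + m) :: 'a) = fact m * fact i * of_nat ((i + m) choose m)"
      by (metis of_nat_fact of_nat_mult)
    moreover have "(of_nat ((i + m) choose m) :: 'a) \<noteq> 0"
      by simp
    ultimately show ?thesis
      by (simp add: power_add power_mult_distrib)
  qed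
  ultimately have "(\<lambda>i. c ^ (i + m) * of_nat ((i + m) choose m) * x ^ (i + m - m) / fact (i + m))
      sums (c ^ m / fact m * exp (c * x))"
    by simp
  then show ?thesis
    by (subst (asm) sums_zero_iff_shift[where n = m]) auto
qed

lemma mat_exp_jordan_block:
  assumes "i \<le> j" "j < n"
  shows "mat_exp (c \<cdot>\<^sub>m jordan_block n x) $$ (i, j) = c ^ (j - i) / fact (j - i) * exp (c * x)"
proof -
  have "((c \<cdot>\<^sub>m jordan_block n x) ^\<^sub>m k) $$ (i, j) / of_nat (fact k)
      = c ^ k * of_nat (k choose (j - i)) * x ^ (k - (j - i)) / fact k" for k
    using assms by (simp add: smult_pow_mat[of _ n] jordan_block_pow diff_diff_right)
  then have "(\<Sum>k. ((c \<cdot>\<^sub>m jordan_block n x) ^\<^sub>m k) $$ (i, j) / of_nat (fact k))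
      = c ^ (j - i) / fact (j - i) * exp (c * x)"
    using sums_unique[OF sums_choose_exp, symmetric] by simp
  then show ?thesis
    using assms by (simp add: mat_exp_def)
qed

lemma norm_integral_le_nn_integral:
  fixes f :: "'a \<Rightarrow> 'b :: {banach, second_countable_topology}"
  shows "ennreal (norm (integral\<^sup>L M f)) \<le> (\<integral>\<^sup>+x. norm (f x) \<partial>M)"
  by (cases "integrable M f") (simp_all add: integral_norm_bound_ennreal not_integrable_integral_eq)

lemma (in prob_space) emeasure_less_indep:
  fixes X Y :: "'a \<Rightarrow> real"
  assumes "indep_var borel X borel Y"
  shows "emeasure M {\<omega>\<in>space M. X \<omega> < Y \<omega>} = (\<integral>\<^sup>+\<omega>. emeasure M {\<omega>'\<in>space M. X \<omega> < Y \<omega>'} \<partial>M)"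
proof -
  have [measurable]: "X \<in> borel_measurable M" "Y \<in> borel_measurable M"
    and joint: "distr M (borel \<Otimes>\<^sub>M borel) (\<lambda>\<omega>. (X \<omega>, Y \<omega>)) = distr M borel X \<Otimes>\<^sub>M distr M borel Y"
    using assms unfolding indep_var_distribution_eq by auto
  define S where "S = {p \<in> space (borel \<Otimes>\<^sub>M borel). fst p < (snd p :: real)}"
  have S[measurable]: "S \<in> sets (borel \<Otimes>\<^sub>M borel)"
    unfolding S_def by measurable
  interpret Y: prob_space "distr M borel Y"
    by (rule prob_space_distr) simp
  have "emeasure M {\<omega>\<in>space M. X \<omega> < Y \<omega>} = emeasure (distr M (borel \<Otimes>\<^sub>M borel) (\<lambda>\<omega>. (X \<omega>, Y \<omega>))) S"
    by (subst emeasure_distr[OF _ S]) (auto simp: S_def space_pair_measure intro!: arg_cong[where f = "emeasure M"])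
  also have "\<dots> = (\<integral>\<^sup>+x. emeasure (distr M borel Y) (Pair x -` S) \<partial>distr M borel X)"
    unfolding joint by (rule Y.emeasure_pair_measure_alt) simp
  also have "\<dots> = (\<integral>\<^sup>+\<omega>. emeasure (distr M borel Y) (Pair (X \<omega>) -` S) \<partial>M)"
    by (rule nn_integral_distr) (auto intro: Y.measurable_emeasure_Pair)
  also have "\<dots> = (\<integral>\<^sup>+\<omega>. emeasure M {\<omega>'\<in>space M. X \<omega> < Y \<omega>'} \<partial>M)"
    by (intro nn_integral_cong, subst emeasure_distr)
      (auto simp: S_def space_pair_measure intro!: arg_cong[where f = "emeasure M"])
  finally show ?thesis .
qed

lemma (in prob_space) emeasure_less_erlang:
  fixes X Y :: "'a \<Rightarrow> real"
  assumes "distributed M lborel Y (erlang_density k \<mu>)" and "0 < \<mu>"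
    and "indep_var borel X borel Y" and "\<forall>\<omega>\<in>space M. 0 \<le> X \<omega>"
  shows "emeasure M {\<omega>\<in>space M. X \<omega> < Y \<omega>} = (\<integral>\<^sup>+\<omega>. ennreal (1 - erlang_CDF k \<mu> (X \<omega>)) \<partial>M)"
  unfolding emeasure_less_indep[OF assms(3)]
  using assms(1,2,4) by (intro nn_integral_cong) (simp add: emeasure_eq_measure erlang_distributed_gt)

lemma borel_measurable_erlang_CDF[measurable]: "erlang_CDF k \<mu> \<in> borel_measurable borel"
  unfolding erlang_CDF_def by measurable

lemma erlang_term_le_tail:
  fixes x \<mu> :: real
  assumes "0 \<le> x" and "0 < \<mu>"
  shows "exp (- \<mu> * x) * x ^ m / fact m \<le> (1 - erlang_CDF m \<mu> x) / \<mu> ^ m"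
proof -
  have "(\<mu> * x) ^ m * exp (- \<mu> * x) / fact m \<le> (\<Sum>k\<le>m. (\<mu> * x) ^ k * exp (- \<mu> * x) / fact k)"
    by (rule member_le_sum) (use assms in auto)
  also have "\<dots> = 1 - erlang_CDF m \<mu> x"
    using assms by (simp add: erlang_CDF_def)
  finally show ?thesis
    using assms by (simp add: power_mult_distrib field_simps)
qed

lemma (in prob_space) norm_mat_laplace_jordan_block_le:
  assumes [measurable]: "X \<in> borel_measurable M" and X_nonneg: "\<forall>\<omega>\<in>space M. 0 \<le> X \<omega>"
    and "m < n" and \<mu>: "0 < Re l"
    and Y: "distributed M lborel Y (erlang_density m (Re l))" and indep: "indep_var borel X borel Y"
  shows "cmod (mat_laplace M X (jordan_block n l) $$ (0, m)) \<le> prob {\<omega>\<in>space M. X \<omega> < Y \<omega>} / Re l ^ m"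
proof -
  define c where "c = 1 / Re l ^ m"
  have c: "0 < c"
    using \<mu> by (simp add: c_def)
  have "mat_laplace M X (jordan_block n l) $$ (0, m)
      = (\<integral>\<omega>. (- complex_of_real (X \<omega>)) ^ m / fact m * exp (- complex_of_real (X \<omega>) * l) \<partial>M)"
    using \<open>m < n\<close> by (simp add: mat_laplace_def mat_exp_jordan_block)
  then have "ennreal (cmod (mat_laplace M X (jordan_block n l) $$ (0, m)))
      \<le> (\<integral>\<^sup>+\<omega>. cmod ((- complex_of_real (X \<omega>)) ^ m / fact m * exp (- complex_of_real (X \<omega>) * l)) \<partial>M)"
    by (simp only: norm_integral_le_nn_integral)
  also have "\<dots> = (\<integral>\<^sup>+\<omega>. ennreal (exp (- Re l * X \<omega>) * X \<omega> ^ m / fact m) \<partial>M)"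
    using X_nonneg by (intro nn_integral_cong) (simp add: norm_mult norm_divide norm_exp_eq_Re norm_power)
  also have "\<dots> \<le> (\<integral>\<^sup>+\<omega>. ennreal c * ennreal (1 - erlang_CDF m (Re l) (X \<omega>)) \<partial>M)"
    using X_nonneg erlang_term_le_tail[OF _ \<mu>] c
    by (intro nn_integral_mono) (simp add: c_def ennreal_mult'[symmetric] ennreal_leI)
  also have "\<dots> = ennreal c * emeasure M {\<omega>\<in>space M. X \<omega> < Y \<omega>}"
    by (simp add: nn_integral_cmult emeasure_less_erlang[OF Y \<mu> indep X_nonneg])
  also have "\<dots> = ennreal (prob {\<omega>\<in>space M. X \<omega> < Y \<omega>} / Re l ^ m)"
    using c by (simp add: c_def emeasure_eq_measure ennreal_mult'[symmetric])
  finally show ?thesis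
    using \<mu> by (subst (asm) ennreal_le_iff) auto
qed

theorem lemma3:
  fixes M :: "'a measure" and X :: "'a \<Rightarrow> real" and Z :: "nat \<Rightarrow> 'a \<Rightarrow> real"
    and n :: nat and l :: complex
  assumes "prob_space M"
    and "X \<in> borel_measurable M"
    and "\<forall>\<omega>\<in>space M. 0 \<le> X \<omega>"
    and "0 < Re l"
    and "\<forall>j\<in>{1..n}. distributed M lborel (Z j) (erlang_density (j - 1) (Re l))"
    and "\<forall>j\<in>{1..n}. prob_space.indep_var M borel X borel (Z j)"
    and "Z 0 = (\<lambda>_. 0)"
    and "j \<in> {1..n}"
  shows "cmod (mat_laplace M X (jordan_block n l) $$ (0, j - 1))
           \<le> Re l powi (1 - int j) *
             max (measure M {\<omega>\<in>space M. Z j \<omega> > X \<omega>})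
                 (measure M {\<omega>\<in>space M. Z (j - 1) \<omega> > X \<omega>})
       \<and> Re l powi (1 - int j) *
             max (measure M {\<omega>\<in>space M. Z j \<omega> > X \<omega>})
                 (measure M {\<omega>\<in>space M. Z (j - 1) \<omega> > X \<omega>})
         \<le> Re l powi (1 - int j)"
proof -
  interpret prob_space M by fact
  define m where "m = j - 1"
  define p where "p = prob {\<omega>\<in>space M. Z j \<omega> > X \<omega>}"
  define q where "q = prob {\<omega>\<in>space M. Z m \<omega> > X \<omega>}"
  \<comment> \<open>Only \<open>Z j\<close> enters the bound.\<close>
  have "m < n" and j: "j = Suc m"
    using assms(8) by (auto simp: m_def)
  have "distributed M lborel (Z j) (erlang_density m (Re l))" and "indep_var borel X borel (Z j)"
    using assms(5,6,8) by (auto simp: m_def)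
  then have "cmod (mat_laplace M X (jordan_block n l) $$ (0, m)) \<le> p / Re l ^ m"
    unfolding p_def using norm_mat_laplace_jordan_block_le assms(2-4) \<open>m < n\<close> by blast
  also have "\<dots> \<le> Re l powi (1 - int j) * max p q"
    using assms(4) by (simp add: j power_int_minus inverse_eq_divide divide_right_mono)
  finally have "cmod (mat_laplace M X (jordan_block n l) $$ (0, m)) \<le> Re l powi (1 - int j) * max p q" .
  moreover have "Re l powi (1 - int j) * max p q \<le> Re l powi (1 - int j)"
    using assms(4) by (intro mult_left_le) (auto simp: p_def q_def)
  ultimately show ?thesis
    by (simp add: m_def p_def q_def)
qed
end
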